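(* For every positive integer $n$, $|\Delta(n)|$ equals the number of partitions of $n$ into distinct parts, which equals the number of partitions of $n$ into odd parts.
   Context: A partition of a positive integer $n$ is a finite non-increasing sequence $\alpha=(\alpha_1,\dots,\alpha_l)$ of positive integers with sum $n$; $\mathcal{P}(n)$ is the set of partitions of $n$, and $\alpha_i=0$ for $i>l$. The diagonal sequence is $\delta(\alpha)=(d_k)_{k\ge1}$ with $d_k=|\{i:1\le i\le k,\ \alpha_i+i-1\ge k\}|$, trailing zeros omitted, and $\Delta(n)=\{\delta(\alpha):\alpha\in\mathcal{P}(n)\}$. *)

theory Defs
  imports Main
begin

definition partitions :: "nat \<Rightarrow> nat list set" where
  "partitions n = {xs. sorted_wrt (\<ge>) xs \<and> (\<forall>x\<in>set xs. 0 < x) \<and> sum_list xs = n}"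

definition part :: "nat list \<Rightarrow> nat \<Rightarrow> nat" where
  "part xs i = (if 1 \<le> i \<and> i \<le> length xs then xs ! (i - 1) else 0)"

text \<open>Diagonal sequence as a function on indices k \<ge> 1 (value 0 at k = 0);
  it is eventually zero, so equality of these functions is equality of the
  sequences with trailing zeros omitted.\<close>
definition diag :: "nat list \<Rightarrow> nat \<Rightarrow> nat" where
  "diag xs k = card {i. 1 \<le> i \<and> i \<le> k \<and> part xs i + i - 1 \<ge> k}"

definition Diag :: "nat \<Rightarrow> (nat \<Rightarrow> nat) set" where
  "Diag n = diag ` partitions n"

end

(*
  Write beta_i = alpha_i + i - 1, so that d_k counts the indices i <= k with beta_i >= k.
  If the parts of alpha are distinct, beta is non-increasing on 1..l, so these indices form
  the initial segment 1..d_k; hence d_k >= i iff i <= k < alpha_i + i, and alpha_i is the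
  number of k with d_k >= i.  So delta is injective on partitions into distinct parts.

  For an arbitrary partition, d_k <= k, and as soon as d_k < k the sequence d is
  non-increasing from k on.  Hence d_k = k for k up to m = max d, and for 1 <= i <= m the set
  {k. d_k >= i} is an interval starting at i.  The lengths of these intervals are strictly
  decreasing and form a partition into distinct parts with the same diagonal sequence, of
  the same size because the sum of the d_k is |alpha|.

  The second equality is Glaisher's bijection: an odd part p occurring c times becomes the
  distinct parts p * 2^j, where j runs over the binary digits of c.
*)
theory Submission
  imports
    "HOL-Library.Multiset"
    "HOL-Library.Nat_Bijection"
    "HOL-Computational_Algebra.Primes"
    Defs  (* imported last, so that its part shadows Multiset.part *)
begin

section \<open>Partitions as lists\<close>

definition is_partition :: "nat list \<Rightarrow> bool" where
  "is_partition xs \<longleftrightarrow> sorted_wrt (\<ge>) xs \<and> (\<forall>x\<in>set xs. 0 < x)"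

lemma partitions_eq: "partitions n = {xs. is_partition xs \<and> sum_list xs = n}"
  by (auto simp: partitions_def is_partition_def)

lemma part_eq_0: "length xs < i \<Longrightarrow> part xs i = 0"
  by (simp add: part_def)

lemma part_le_sum_list: "part xs i \<le> sum_list xs"
  by (auto simp: part_def intro!: elem_le_sum_list)

lemma part_pos_iff:
  assumes "is_partition xs"
  shows "0 < part xs i \<longleftrightarrow> 1 \<le> i \<and> i \<le> length xs"
  using assms by (auto simp: is_partition_def part_def)

lemma part_antimono:
  assumes "is_partition xs" "1 \<le> i" "i \<le> j"
  shows "part xs j \<le> part xs i"
proof (cases "j \<le> length xs")
  case True
  show ?thesis
  proof (cases "i = j")
    case False
    then have "xs ! (j - 1) \<le> xs ! (i - 1)"
      using sorted_wrt_nth_less[of "(\<ge>)" xs "i - 1" "j - 1"] assms True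
      by (simp add: is_partition_def)
    then show ?thesis using assms True by (simp add: part_def)
  qed simp
qed (simp add: part_eq_0)

lemma partition_eqI:
  assumes "is_partition xs" "is_partition ys" "\<And>i. 1 \<le> i \<Longrightarrow> part xs i = part ys i"
  shows "xs = ys"
proof -
  have len: "i \<le> length xs \<longleftrightarrow> i \<le> length ys" if "1 \<le> i" for i
    using part_pos_iff[OF assms(1), of i] part_pos_iff[OF assms(2), of i] assms(3)[OF that] that
    by auto
  have "length xs = length ys"
    using len[of "length xs"] len[of "length ys"] by linarith
  moreover have "xs ! a = ys ! a" if "a < length xs" for a
    using assms(3)[of "Suc a"] that \<open>length xs = length ys\<close> by (simp add: part_def)
  ultimately show ?thesis by (simp add: list_eq_iff_nth_eq)
qed

(* k < part xs i + i is the condition alpha_i + i - 1 >= k, free of truncated subtraction. *)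
definition diag_indices :: "nat list \<Rightarrow> nat \<Rightarrow> nat set" where
  "diag_indices xs k = {i. 1 \<le> i \<and> i \<le> k \<and> k < part xs i + i}"

lemma diag_eq_card: "diag xs k = card (diag_indices xs k)"
  unfolding diag_def diag_indices_def by (rule arg_cong[where f = card]) auto

lemma diag_indices_subset: "diag_indices xs k \<subseteq> {1..min k (length xs)}"
  by (auto simp: diag_indices_def part_def split: if_splits)

lemma finite_diag_indices [simp]: "finite (diag_indices xs k)"
  using diag_indices_subset finite_subset by blast

lemma diag_le: "diag xs k \<le> k" "diag xs k \<le> length xs"
proof -
  have "diag xs k \<le> card {1..min k (length xs)}"
    unfolding diag_eq_card by (rule card_mono[OF _ diag_indices_subset]) simp
  then show "diag xs k \<le> k" "diag xs k \<le> length xs" by simp_all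
qed

lemma diag_eq_0:
  assumes "sum_list xs + length xs \<le> k"
  shows "diag xs k = 0"
proof -
  have "i \<notin> diag_indices xs k" for i
  proof
    assume i: "i \<in> diag_indices xs k"
    then have "i \<le> length xs" using diag_indices_subset by fastforce
    moreover have "k < part xs i + i" using i by (simp add: diag_indices_def)
    ultimately show False using part_le_sum_list[of xs i] assms by linarith
  qed
  then have "diag_indices xs k = {}" by blast
  then show ?thesis by (simp add: diag_eq_card)
qed

section \<open>Partitions into distinct parts\<close>

lemma sorted_wrt_greater_iff:
  "sorted_wrt (>) xs \<longleftrightarrow> sorted_wrt (\<ge>) xs \<and> distinct (xs :: 'a :: linorder list)"
  by (induction xs) (auto simp: order.order_iff_strict)

lemma eq_atLeastLessThan_if_down_closed:
  fixes T :: "nat set"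
  assumes "finite T" "T \<subseteq> {i..}" "\<And>a b. a \<in> T \<Longrightarrow> i \<le> b \<Longrightarrow> b \<le> a \<Longrightarrow> b \<in> T"
  shows "T = {i..<i + card T}"
proof (cases "T = {}")
  case False
  define M where "M = Max T"
  have "M \<in> T" using False assms(1) by (simp add: M_def)
  then have "T = {i..M}"
    using assms by (auto simp: M_def)
  moreover have "i \<le> M" using \<open>M \<in> T\<close> assms(2) by auto
  ultimately show ?thesis by (simp add: atLeastLessThanSuc_atLeastAtMost)
qed simp

lemma part_add_index_antimono:
  assumes "is_partition xs" "distinct xs" "1 \<le> i" "i \<le> j" "j \<le> length xs"
  shows "part xs j + j \<le> part xs i + i"
  using assms(4,5)
proof (induction j rule: dec_induct)
  case (step m)
  have "xs ! m \<noteq> xs ! (m - 1)"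
    using assms(2,3) step by (simp add: nth_eq_iff_index_eq)
  then have "part xs (Suc m) < part xs m"
    using part_antimono[OF assms(1), of m "Suc m"] assms(3) step by (simp add: part_def)
  then show ?case using step.IH step.prems by simp
qed simp

lemma diag_indices_distinct:
  assumes "is_partition xs" "distinct xs"
  shows "diag_indices xs k = {1..<1 + diag xs k}"
  unfolding diag_eq_card
proof (rule eq_atLeastLessThan_if_down_closed)
  show "b \<in> diag_indices xs k" if "a \<in> diag_indices xs k" "1 \<le> b" "b \<le> a" for a b
  proof -
    have "a \<le> k" "a \<le> length xs"
      using that(1) diag_indices_subset[of xs k] by auto
    moreover have "k < part xs a + a"
      using that(1) by (simp add: diag_indices_def)
    ultimately show ?thesis
      using that(2,3) part_add_index_antimono[OF assms, of b a] by (simp add: diag_indices_def)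
  qed
qed (auto simp: diag_indices_def)

lemma diag_ge_iff:
  assumes "is_partition xs" "distinct xs" "1 \<le> i"
  shows "i \<le> diag xs k \<longleftrightarrow> i \<le> k \<and> k < part xs i + i"
proof -
  have "i \<le> diag xs k \<longleftrightarrow> i \<in> diag_indices xs k"
    using diag_indices_distinct[OF assms(1,2), of k] assms(3) by auto
  then show ?thesis using assms(3) by (simp add: diag_indices_def)
qed

lemma card_diag_ge:
  assumes "is_partition xs" "distinct xs" "1 \<le> i"
  shows "card {k. i \<le> diag xs k} = part xs i"
proof -
  have "{k. i \<le> diag xs k} = {i..<part xs i + i}"
    by (rule set_eqI) (simp add: diag_ge_iff[OF assms])
  then show ?thesis by simp
qed

lemma inj_on_diag: "inj_on diag {xs. is_partition xs \<and> distinct xs}"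
proof (rule inj_onI)
  fix xs ys
  assume "xs \<in> {xs. is_partition xs \<and> distinct xs}" "ys \<in> {xs. is_partition xs \<and> distinct xs}"
    and "diag xs = diag ys"
  then show "xs = ys"
    using card_diag_ge[of xs] card_diag_ge[of ys] by (intro partition_eqI) auto
qed

section \<open>Diagonal sequences of arbitrary partitions\<close>

lemma diag_indices_exit:
  assumes "is_partition xs" "1 \<le> k" "k < length xs" "diag xs k < k"
  obtains j where "j \<in> diag_indices xs k" "part xs j + j = Suc k"
proof -
  (* Some i <= k has alpha_i + i <= k, while alpha_k + k > k; since alpha_i + i grows by
     at most one per step, the successor of the largest such i lands exactly on k + 1. *)
  define A where "A = {i. 1 \<le> i \<and> i \<le> k \<and> part xs i + i \<le> k}"
  have "finite A" unfolding A_def by (rule finite_subset[of _ "{..k}"]) auto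
  have "A \<noteq> {}"
  proof
    assume "A = {}"
    then have "diag_indices xs k = {1..k}" by (auto simp: A_def diag_indices_def)
    then show False using assms(4) by (simp add: diag_eq_card)
  qed
  define i where "i = Max A"
  have "i \<in> A" using \<open>finite A\<close> \<open>A \<noteq> {}\<close> by (simp add: i_def)
  have "0 < part xs k" using part_pos_iff[OF assms(1)] assms(2,3) by simp
  then have "i < k" using \<open>i \<in> A\<close> by (auto simp: A_def le_less)
  have "Suc i \<notin> A" using Max_ge[OF \<open>finite A\<close>] i_def by fastforce
  then have above: "k < part xs (Suc i) + Suc i" using \<open>i < k\<close> by (auto simp: A_def)
  have "part xs (Suc i) \<le> part xs i"
    using part_antimono[OF assms(1)] \<open>i \<in> A\<close> by (simp add: A_def)
  then have "part xs (Suc i) + Suc i = Suc k" using above \<open>i \<in> A\<close> by (simp add: A_def)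
  moreover have "Suc i \<in> diag_indices xs k"
    using above \<open>i < k\<close> by (simp add: diag_indices_def)
  ultimately show ?thesis using that by blast
qed

lemma diag_Suc_le:
  assumes "is_partition xs" "1 \<le> k" "diag xs k < k"
  shows "diag xs (Suc k) \<le> diag xs k"
proof (cases "k < length xs")
  case True
  then obtain j where j: "j \<in> diag_indices xs k" "part xs j + j = Suc k"
    using diag_indices_exit assms by blast
  have "diag_indices xs (Suc k) \<subseteq> insert (Suc k) (diag_indices xs k - {j})"
    using j by (auto simp: diag_indices_def)
  then have "diag xs (Suc k) \<le> card (insert (Suc k) (diag_indices xs k - {j}))"
    unfolding diag_eq_card by (simp add: card_mono)
  also have "\<dots> \<le> Suc (card (diag_indices xs k - {j}))"
    by (simp add: card_insert_if)
  also have "\<dots> = diag xs k"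
    using j(1) by (metis card_Suc_Diff1 diag_eq_card finite_diag_indices)
  finally show ?thesis .
next
  case False
  then have "diag_indices xs (Suc k) \<subseteq> diag_indices xs k"
    by (auto simp: diag_indices_def part_eq_0 le_Suc_eq)
  then show ?thesis unfolding diag_eq_card by (simp add: card_mono)
qed

lemma diag_antimono_after_deficit:
  assumes "is_partition xs" "1 \<le> j" "diag xs j < j" "j \<le> k"
  shows "diag xs k \<le> diag xs j"
  using assms(4)
proof (induction k rule: dec_induct)
  case (step m)
  have "1 \<le> m" "diag xs m < m"
    using assms(2,3) step.hyps(1) step.IH by linarith+
  then have "diag xs (Suc m) \<le> diag xs m"
    by (rule diag_Suc_le[OF assms(1)])
  then show ?case using step.IH by linarith
qed simp

lemma finite_range_diag: "finite (range (diag xs))"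
  by (rule finite_subset[of _ "{..length xs}"]) (use diag_le(2) in auto)

lemma diag_eq_index_le_Max:
  assumes "is_partition xs" "1 \<le> k" "k \<le> Max (range (diag xs))"
  shows "diag xs k = k"
proof (rule ccontr)
  assume "diag xs k \<noteq> k"
  then have deficit: "diag xs k < k" using diag_le(1)[of xs k] by linarith
  have below: "diag xs j < k" for j
  proof (cases "k \<le> j")
    case True
    then have "diag xs j \<le> diag xs k"
      by (rule diag_antimono_after_deficit[OF assms(1,2) deficit])
    then show ?thesis using deficit by linarith
  next
    case False
    then show ?thesis using diag_le(1)[of xs j] by linarith
  qed
  have "Max (range (diag xs)) \<in> range (diag xs)"
    by (rule Max_in[OF finite_range_diag]) simp
  then obtain j where "Max (range (diag xs)) = diag xs j" by blast
  then show False using below[of j] assms(3) by linarith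
qed

lemma finite_diag_ge:
  assumes "1 \<le> i"
  shows "finite {k. i \<le> diag xs k}"
proof (rule finite_subset)
  show "{k. i \<le> diag xs k} \<subseteq> {..<sum_list xs + length xs}"
  proof
    fix k assume "k \<in> {k. i \<le> diag xs k}"
    then show "k \<in> {..<sum_list xs + length xs}"
      using diag_eq_0[of xs k] assms by (cases "sum_list xs + length xs \<le> k") auto
  qed
qed simp

lemma diag_ge_eq_interval:
  assumes "is_partition xs" "1 \<le> i" "i \<le> Max (range (diag xs))"
  shows "{k. i \<le> diag xs k} = {i..<i + card {k. i \<le> diag xs k}}"
proof (rule eq_atLeastLessThan_if_down_closed)
  show "finite {k. i \<le> diag xs k}"
    using assms(2) by (rule finite_diag_ge)
  show "{k. i \<le> diag xs k} \<subseteq> {i..}"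
    using diag_le(1)[of xs] order_trans by auto
  show "b \<in> {k. i \<le> diag xs k}" if "a \<in> {k. i \<le> diag xs k}" "i \<le> b" "b \<le> a" for a b
  proof (cases "b \<le> Max (range (diag xs))")
    case True
    then show ?thesis using diag_eq_index_le_Max assms that(2) by simp
  next
    case False
    then have "diag xs b < b"
      using Max_ge[OF finite_range_diag, of "diag xs b" xs] by auto
    then have "diag xs a \<le> diag xs b"
      using diag_antimono_after_deficit[OF assms(1) _ _ that(3)] assms(2) that(2) by simp
    then show ?thesis using that(1) by simp
  qed
qed

lemma card_diag_ge_less:
  assumes "is_partition xs" "1 \<le> i" "i < j" "j \<le> Max (range (diag xs))"
  shows "card {k. j \<le> diag xs k} < card {k. i \<le> diag xs k}"
proof (rule psubset_card_mono)
  show "finite {k. i \<le> diag xs k}"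
    using assms(2) by (rule finite_diag_ge)
  have "diag xs i = i"
    using diag_eq_index_le_Max[OF assms(1,2)] assms(3,4) by simp
  then have "i \<in> {k. i \<le> diag xs k}" "i \<notin> {k. j \<le> diag xs k}"
    using assms(3) by auto
  moreover have "{k. j \<le> diag xs k} \<subseteq> {k. i \<le> diag xs k}"
    using assms(3) by auto
  ultimately show "{k. j \<le> diag xs k} \<subset> {k. i \<le> diag xs k}"
    by blast
qed

lemma nat_eq_if_le_iff_le:
  fixes a b :: nat
  assumes "\<And>i. 1 \<le> i \<Longrightarrow> i \<le> a \<longleftrightarrow> i \<le> b"
  shows "a = b"
proof (rule le_antisym)
  show "a \<le> b" using assms[of a] by (cases a) auto
  show "b \<le> a" using assms[of b] by (cases b) auto
qed

lemma diag_realized_by_distinct: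
  assumes xs: "is_partition xs"
  obtains ys where "is_partition ys" "distinct ys" "diag ys = diag xs"
proof -
  (* By card_diag_ge, the i-th part has to be the number of k with i <= d_k. *)
  define m where "m = Max (range (diag xs))"
  define c where "c i = card {k. i \<le> diag xs k}" for i
  define ys where "ys = map c [1..<Suc m]"
  have interval: "{k. i \<le> diag xs k} = {i..<i + c i}" if "1 \<le> i" "i \<le> m" for i
    using diag_ge_eq_interval[OF xs] that by (simp add: c_def m_def)
  have "sorted_wrt (>) ys"
    unfolding ys_def c_def m_def
    by (rule sorted_wrt_map_mono[OF sorted_wrt_upt]) (auto intro: card_diag_ge_less[OF xs])
  moreover have "0 < c i" if "1 \<le> i" "i \<le> m" for i
    using interval[OF that] diag_eq_index_le_Max[OF xs] that by (auto simp: m_def)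
  ultimately have ys: "is_partition ys" "distinct ys"
    by (auto simp: is_partition_def sorted_wrt_greater_iff ys_def)
  have part_ys: "part ys i = (if 1 \<le> i \<and> i \<le> m then c i else 0)" for i
    by (auto simp: ys_def part_def nth_map simp del: upt_Suc)
  have "i \<le> diag ys k \<longleftrightarrow> i \<le> diag xs k" if "1 \<le> i" for i k
  proof (cases "i \<le> m")
    case True
    have "i \<le> diag ys k \<longleftrightarrow> i \<le> k \<and> k < part ys i + i"
      by (rule diag_ge_iff[OF ys that])
    also have "\<dots> \<longleftrightarrow> k \<in> {i..<i + c i}"
      using part_ys[of i] True that by auto
    also have "\<dots> \<longleftrightarrow> i \<le> diag xs k"
      unfolding interval[OF that True, symmetric] by simp
    finally show ?thesis .
  next
    case False
    have "part ys i = 0" using False part_ys by simp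
    moreover have "diag xs k \<le> m"
      using Max_ge[OF finite_range_diag] by (simp add: m_def)
    ultimately show ?thesis
      using diag_ge_iff[OF ys that] False by simp
  qed
  then have "diag ys = diag xs"
    by (intro ext nat_eq_if_le_iff_le)
  then show ?thesis using that ys by blast
qed

lemma sum_diag:
  assumes "sum_list xs + length xs \<le> N"
  shows "(\<Sum>k<N. diag xs k) = sum_list xs"
proof -
  let ?L = "length xs"
  have diag_as_sum: "diag xs k = (\<Sum>i=1..?L. of_bool (i \<le> k \<and> k < part xs i + i))" for k
  proof -
    have "diag_indices xs k = {1..?L} \<inter> {i. i \<le> k \<and> k < part xs i + i}"
      using diag_indices_subset[of xs k] by (auto simp: diag_indices_def)
    then show ?thesis by (simp add: diag_eq_card sum_of_bool_eq)
  qed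
  have "(\<Sum>k<N. diag xs k) = (\<Sum>k<N. \<Sum>i=1..?L. of_bool (i \<le> k \<and> k < part xs i + i))"
    by (simp only: diag_as_sum)
  also have "\<dots> = (\<Sum>i=1..?L. \<Sum>k<N. of_bool (i \<le> k \<and> k < part xs i + i))"
    by (rule sum.swap)
  also have "\<dots> = (\<Sum>i=1..?L. part xs i)"
  proof (rule sum.cong)
    fix i assume "i \<in> {1..?L}"
    then have "part xs i + i \<le> N" using part_le_sum_list[of xs i] assms by auto
    then have "{..<N} \<inter> {k. i \<le> k \<and> k < part xs i + i} = {i..<part xs i + i}" by auto
    then show "(\<Sum>k<N. of_bool (i \<le> k \<and> k < part xs i + i)) = part xs i"
      by (simp add: sum_of_bool_eq)
  qed simp
  also have "\<dots> = (\<Sum>a<?L. xs ! a)"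
    by (rule sum.reindex_bij_witness[of _ Suc "\<lambda>i. i - 1"]) (auto simp: part_def)
  also have "\<dots> = sum_list xs"
    by (simp add: sum_list_sum_nth atLeast0LessThan)
  finally show ?thesis .
qed

lemma Diag_eq_image_distinct: "Diag n = diag ` {xs \<in> partitions n. distinct xs}"
proof (intro equalityI subsetI)
  fix f assume "f \<in> Diag n"
  then obtain xs where xs: "xs \<in> partitions n" "f = diag xs"
    by (auto simp: Diag_def)
  then obtain ys where ys: "is_partition ys" "distinct ys" "diag ys = diag xs"
    using diag_realized_by_distinct by (auto simp: partitions_eq)
  define N where "N = sum_list xs + length xs + sum_list ys + length ys"
  have "sum_list ys = sum_list xs"
    using sum_diag[of xs N] sum_diag[of ys N] ys(3) by (simp add: N_def)
  then have "ys \<in> {xs \<in> partitions n. distinct xs}"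
    using xs(1) ys(1,2) by (simp add: partitions_eq)
  then show "f \<in> diag ` {xs \<in> partitions n. distinct xs}"
    using xs(2) ys(3) by (metis image_eqI)
qed (auto simp: Diag_def)

lemma card_Diag: "card (Diag n) = card {xs \<in> partitions n. distinct xs}"
  unfolding Diag_eq_image_distinct
  by (rule card_image, rule inj_on_subset[OF inj_on_diag]) (auto simp: partitions_eq)

section \<open>Glaisher's bijection\<close>

lemma odd_mult_power2_eq_iff:
  fixes p q :: nat
  assumes "odd p" "odd q"
  shows "p * 2 ^ j = q * 2 ^ k \<longleftrightarrow> p = q \<and> j = k"
proof
  assume eq: "p * 2 ^ j = q * 2 ^ k"
  have "multiplicity 2 (p * 2 ^ j) = j" "multiplicity 2 (q * 2 ^ k) = k"
    using assms by (auto intro!: multiplicity_decomposeI)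
  then show "p = q \<and> j = k" using eq by auto
qed simp

lemma odd_mult_power2_cases:
  fixes a :: nat
  assumes "a \<noteq> 0"
  obtains p j where "odd p" "a = p * 2 ^ j"
proof -
  obtain y where "a = 2 ^ multiplicity 2 a * y" "\<not> 2 dvd y"
    using multiplicity_decompose'[of a 2] assms by auto
  then show ?thesis using that[of y "multiplicity 2 a"] by (simp add: mult.commute)
qed

lemma set_eq_if_odd_slices_eq:
  fixes A B :: "nat set"
  assumes "0 \<notin> A" "0 \<notin> B" "\<And>p. odd p \<Longrightarrow> {j. p * 2 ^ j \<in> A} = {j. p * 2 ^ j \<in> B}"
  shows "A = B"
proof -
  have subset: "a \<in> Y"
    if a: "a \<in> X" and zero: "0 \<notin> X"
      and slices: "\<And>p. odd p \<Longrightarrow> {j. p * 2 ^ j \<in> X} = {j. p * 2 ^ j \<in> Y}"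
    for a and X Y :: "nat set"
  proof -
    have "a \<noteq> 0" using a zero by (cases "a = 0") simp_all
    then obtain p j where "odd p" "a = p * 2 ^ j"
      by (rule odd_mult_power2_cases)
    then have "j \<in> {j. p * 2 ^ j \<in> X}" using a by simp
    then have "j \<in> {j. p * 2 ^ j \<in> Y}" using slices[OF \<open>odd p\<close>] by simp
    then show ?thesis using \<open>a = p * 2 ^ j\<close> by simp
  qed
  show ?thesis
  proof (intro equalityI subsetI)
    show "a \<in> B" if "a \<in> A" for a
      by (rule subset[OF that assms(1) assms(3)])
    show "a \<in> A" if "a \<in> B" for a
      by (rule subset[OF that assms(2) assms(3)[symmetric]])
  qed
qed

lemma sum_mset_eq_sum_count: "sum_mset M = (\<Sum>x\<in>set_mset M. count M x * (x :: nat))"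
proof -
  obtain xs where "M = mset xs" by (metis ex_mset)
  then show ?thesis
    using sum_list_map_eq_sum_count[of "\<lambda>x. x" xs] by (simp add: sum_mset_sum_list count_mset)
qed

definition glaisher :: "nat multiset \<Rightarrow> nat set" where
  "glaisher M = (\<lambda>(p, j). p * 2 ^ j) ` (SIGMA p:set_mset M. set_decode (count M p))"

lemma finite_glaisher: "finite (glaisher M)"
  unfolding glaisher_def by (intro finite_imageI finite_SigmaI) simp_all

lemma zero_notin_glaisher:
  assumes "\<forall>p\<in>#M. odd p"
  shows "0 \<notin> glaisher M"
proof
  assume "0 \<in> glaisher M"
  then obtain p j where "p \<in># M" "p * 2 ^ j = 0"
    unfolding glaisher_def by fastforce
  then show False using assms by fastforce
qed

lemma glaisher_slice:
  assumes "\<forall>q\<in>#M. odd q" "odd p"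
  shows "{j. p * 2 ^ j \<in> glaisher M} = set_decode (count M p)"
proof (intro equalityI subsetI)
  fix j assume "j \<in> {j. p * 2 ^ j \<in> glaisher M}"
  then obtain q i where q: "q \<in># M" "i \<in> set_decode (count M q)" "p * 2 ^ j = q * 2 ^ i"
    by (auto simp: glaisher_def)
  then have "odd q" using assms(1) by blast
  then have "q = p" "i = j" using odd_mult_power2_eq_iff[OF assms(2) \<open>odd q\<close>] q(3) by simp_all
  then show "j \<in> set_decode (count M p)" using q(2) by simp
next
  fix j assume j: "j \<in> set_decode (count M p)"
  then have "p \<in># M" by (cases "count M p = 0") auto
  then have "(p, j) \<in> (SIGMA p:set_mset M. set_decode (count M p))" using j by simp
  then show "j \<in> {j. p * 2 ^ j \<in> glaisher M}"
    unfolding glaisher_def by (auto intro: image_eqI[where x = "(p, j)"])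
qed

lemma sum_glaisher:
  assumes "\<forall>p\<in>#M. odd p"
  shows "\<Sum>(glaisher M) = sum_mset M"
proof -
  have "inj_on (\<lambda>(p, j). p * 2 ^ j :: nat) (SIGMA p:set_mset M. set_decode (count M p))"
    using assms by (auto simp: inj_on_def odd_mult_power2_eq_iff)
  then have "\<Sum>(glaisher M) = (\<Sum>(p, j)\<in>(SIGMA p:set_mset M. set_decode (count M p)). p * 2 ^ j)"
    unfolding glaisher_def by (simp add: sum.reindex case_prod_beta')
  also have "\<dots> = (\<Sum>p\<in>set_mset M. \<Sum>j\<in>set_decode (count M p). p * 2 ^ j)"
    by (rule sum.Sigma[symmetric]) simp_all
  also have "\<dots> = (\<Sum>p\<in>set_mset M. p * set_encode (set_decode (count M p)))"
    by (simp add: set_encode_def sum_distrib_left)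
  also have "\<dots> = (\<Sum>p\<in>set_mset M. count M p * p)"
    by (simp add: mult.commute)
  also have "\<dots> = sum_mset M"
    by (simp add: sum_mset_eq_sum_count)
  finally show ?thesis .
qed

lemma inj_on_glaisher: "inj_on glaisher {M. \<forall>p\<in>#M. odd p}"
proof (rule inj_onI)
  fix M N assume M: "M \<in> {M. \<forall>p\<in>#M. odd p}" and N: "N \<in> {M. \<forall>p\<in>#M. odd p}"
    and eq: "glaisher M = glaisher N"
  show "M = N"
  proof (rule multiset_eqI)
    fix p
    show "count M p = count N p"
    proof (cases "odd p")
      case True
      then have "set_decode (count M p) = set_decode (count N p)"
        using glaisher_slice[of M p] glaisher_slice[of N p] M N eq by simp
      then have "set_encode (set_decode (count M p)) = set_encode (set_decode (count N p))"
        by (rule arg_cong)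
      then show ?thesis by simp
    next
      case False
      then have "p \<notin># M" "p \<notin># N" using M N by auto
      then show ?thesis by (simp add: not_in_iff)
    qed
  qed
qed

definition glaisher_inv :: "nat set \<Rightarrow> nat multiset" where
  "glaisher_inv A = Abs_multiset (\<lambda>p. if odd p then set_encode {j. p * 2 ^ j \<in> A} else 0)"

lemma finite_odd_slice:
  fixes A :: "nat set"
  assumes "finite A" "odd p"
  shows "finite {j. p * 2 ^ j \<in> A}"
proof -
  have "inj (\<lambda>j. p * 2 ^ j)"
    using assms(2) by (auto simp: inj_on_def odd_mult_power2_eq_iff)
  then have "finite ((\<lambda>j. p * 2 ^ j) -` A)"
    by (rule finite_vimageI[OF assms(1)])
  then show ?thesis by (simp add: vimage_def)
qed

lemma count_glaisher_inv:
  assumes "finite A"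
  shows "count (glaisher_inv A) p = (if odd p then set_encode {j. p * 2 ^ j \<in> A} else 0)"
proof -
  have "{p. 0 < (if odd p then set_encode {j. p * 2 ^ j \<in> A} else 0)} \<subseteq> {..Max A}"
  proof
    fix p assume "p \<in> {p. 0 < (if odd p then set_encode {j. p * 2 ^ j \<in> A} else 0)}"
    then have "set_encode {j. p * 2 ^ j \<in> A} \<noteq> 0"
      by (auto split: if_splits)
    then obtain j where "p * 2 ^ j \<in> A"
      by (metis (mono_tags) Collect_empty_eq set_encode_empty)
    then have "p * 2 ^ j \<le> Max A" using assms by simp
    then show "p \<in> {..Max A}" by (simp add: order_trans[OF _ \<open>p * 2 ^ j \<le> Max A\<close>])
  qed
  then have "finite {p. 0 < (if odd p then set_encode {j. p * 2 ^ j \<in> A} else 0)}"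
    by (rule finite_subset) simp
  then have "count (glaisher_inv A) = (\<lambda>p. if odd p then set_encode {j. p * 2 ^ j \<in> A} else 0)"
    unfolding glaisher_inv_def by (rule count_Abs_multiset)
  then show ?thesis by simp
qed

lemma odd_glaisher_inv:
  assumes "finite A"
  shows "\<forall>p\<in>#glaisher_inv A. odd p"
proof
  fix p assume "p \<in># glaisher_inv A"
  then have "count (glaisher_inv A) p \<noteq> 0" by simp
  then show "odd p" by (auto simp: count_glaisher_inv[OF assms] split: if_splits)
qed

lemma glaisher_glaisher_inv:
  assumes "finite A" "0 \<notin> A"
  shows "glaisher (glaisher_inv A) = A"
proof (rule set_eq_if_odd_slices_eq)
  show "{j. p * 2 ^ j \<in> glaisher (glaisher_inv A)} = {j. p * 2 ^ j \<in> A}" if "odd p" for p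
    using glaisher_slice[OF odd_glaisher_inv[OF assms(1)] that] finite_odd_slice[OF assms(1) that]
    by (simp add: count_glaisher_inv[OF assms(1)] that)
  show "0 \<notin> glaisher (glaisher_inv A)"
    by (rule zero_notin_glaisher[OF odd_glaisher_inv[OF assms(1)]])
qed (rule assms(2))

lemma bij_betw_glaisher:
  "bij_betw glaisher {M. (\<forall>p\<in>#M. odd p) \<and> sum_mset M = n} {A. finite A \<and> 0 \<notin> A \<and> \<Sum>A = n}"
proof (rule bij_betw_imageI)
  show "inj_on glaisher {M. (\<forall>p\<in>#M. odd p) \<and> sum_mset M = n}"
    by (rule inj_on_subset[OF inj_on_glaisher]) blast
  show "glaisher ` {M. (\<forall>p\<in>#M. odd p) \<and> sum_mset M = n} = {A. finite A \<and> 0 \<notin> A \<and> \<Sum>A = n}"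
  proof (intro equalityI subsetI)
    fix A assume "A \<in> glaisher ` {M. (\<forall>p\<in>#M. odd p) \<and> sum_mset M = n}"
    then obtain M where M: "\<forall>p\<in>#M. odd p" "sum_mset M = n" "A = glaisher M"
      by blast
    then show "A \<in> {A. finite A \<and> 0 \<notin> A \<and> \<Sum>A = n}"
      using finite_glaisher zero_notin_glaisher[OF M(1)] sum_glaisher[OF M(1)] by simp
  next
    fix A assume "A \<in> {A. finite A \<and> 0 \<notin> A \<and> \<Sum>A = n}"
    then have A: "finite A" "0 \<notin> A" "\<Sum>A = n" by simp_all
    have odd: "\<forall>p\<in>#glaisher_inv A. odd p"
      by (rule odd_glaisher_inv[OF A(1)])
    have "glaisher (glaisher_inv A) = A"
      by (rule glaisher_glaisher_inv[OF A(1,2)])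
    moreover have "sum_mset (glaisher_inv A) = n"
      using sum_glaisher[OF odd] A(3) calculation by simp
    ultimately show "A \<in> glaisher ` {M. (\<forall>p\<in>#M. odd p) \<and> sum_mset M = n}"
      using odd by blast
  qed
qed

section \<open>Partitions as sets and multisets\<close>

lemma bij_betw_Collect_restrict:
  assumes "bij_betw f A B" "\<And>x. x \<in> A \<Longrightarrow> P x \<longleftrightarrow> Q (f x)"
  shows "bij_betw f {x \<in> A. P x} {y \<in> B. Q y}"
proof (rule bij_betw_imageI)
  show "inj_on f {x \<in> A. P x}"
    using bij_betw_imp_inj_on[OF assms(1)] by (rule inj_on_subset) blast
  show "f ` {x \<in> A. P x} = {y \<in> B. Q y}"
    using assms by (auto simp: bij_betw_def)
qed

lemma bij_betw_set_sorted_desc: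
  "bij_betw set {xs :: 'a :: linorder list. sorted_wrt (>) xs} (Collect finite)"
proof (rule bij_betw_byWitness[where f' = "\<lambda>A. rev (sorted_list_of_set A)"])
  show "\<forall>xs\<in>{xs :: 'a list. sorted_wrt (>) xs}. rev (sorted_list_of_set (set xs)) = xs"
  proof
    fix xs :: "'a list" assume "xs \<in> {xs. sorted_wrt (>) xs}"
    then have "sorted (rev xs)" "distinct (rev xs)"
      by (simp_all add: sorted_wrt_greater_iff sorted_wrt_rev)
    then have "sorted_list_of_set (set (rev xs)) = rev xs"
      by (rule sorted_list_of_set.idem_if_sorted_distinct)
    then show "rev (sorted_list_of_set (set xs)) = xs" by simp
  qed
  show "(\<lambda>A. rev (sorted_list_of_set A)) ` Collect finite \<subseteq> {xs :: 'a list. sorted_wrt (>) xs}"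
    by (auto simp: sorted_wrt_rev)
qed auto

lemma bij_betw_mset_sorted_desc:
  "bij_betw mset {xs :: 'a :: linorder list. sorted_wrt (\<ge>) xs} UNIV"
proof (rule bij_betw_byWitness[where f' = "\<lambda>M. rev (sorted_list_of_multiset M)"])
  show "\<forall>xs\<in>{xs :: 'a list. sorted_wrt (\<ge>) xs}. rev (sorted_list_of_multiset (mset xs)) = xs"
  proof
    fix xs :: "'a list" assume "xs \<in> {xs. sorted_wrt (\<ge>) xs}"
    then have "sorted (rev xs)" by (simp add: sorted_wrt_rev)
    then have "sort xs = rev xs"
      by (metis mset_rev properties_for_sort)
    then show "rev (sorted_list_of_multiset (mset xs)) = xs" by simp
  qed
  show "(\<lambda>M. rev (sorted_list_of_multiset M)) ` UNIV \<subseteq> {xs :: 'a list. sorted_wrt (\<ge>) xs}"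
    by (auto simp: sorted_wrt_rev)
qed simp_all

lemma bij_betw_distinct_partitions:
  "bij_betw set {xs \<in> partitions n. distinct xs} {A. finite A \<and> 0 \<notin> A \<and> \<Sum>A = n}"
proof -
  have "{xs \<in> partitions n. distinct xs}
      = {xs \<in> {xs. sorted_wrt (>) xs}. 0 \<notin> set xs \<and> sum_list xs = n}"
    by (auto simp: partitions_def sorted_wrt_greater_iff intro: gr0I)
  moreover have "{A. finite A \<and> 0 \<notin> A \<and> \<Sum>A = n} = {A \<in> Collect finite. 0 \<notin> A \<and> \<Sum>A = n}"
    by auto
  moreover have "bij_betw set {xs \<in> {xs. sorted_wrt (>) xs}. 0 \<notin> set xs \<and> sum_list xs = n}
      {A \<in> Collect finite. 0 \<notin> A \<and> \<Sum>A = n}"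
    by (rule bij_betw_Collect_restrict[OF bij_betw_set_sorted_desc])
      (simp add: sorted_wrt_greater_iff distinct_sum_list_conv_Sum)
  ultimately show ?thesis by simp
qed

lemma bij_betw_odd_partitions:
  "bij_betw mset {xs \<in> partitions n. \<forall>x\<in>set xs. odd x} {M. (\<forall>p\<in>#M. odd p) \<and> sum_mset M = n}"
proof -
  have "{xs \<in> partitions n. \<forall>x\<in>set xs. odd x}
      = {xs \<in> {xs. sorted_wrt (\<ge>) xs}. (\<forall>x\<in>set xs. odd x) \<and> sum_list xs = n}"
    by (auto simp: partitions_def intro: odd_pos)
  moreover have "bij_betw mset {xs \<in> {xs. sorted_wrt (\<ge>) xs}. (\<forall>x\<in>set xs. odd x) \<and> sum_list xs = n}
      {M \<in> UNIV. (\<forall>p\<in>#M. odd p) \<and> sum_mset M = n}"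
    by (rule bij_betw_Collect_restrict[OF bij_betw_mset_sorted_desc]) (simp add: sum_mset_sum_list)
  ultimately show ?thesis by simp
qed

theorem corollary2p4:
  fixes n :: nat
  assumes "0 < n"
  shows "card (Diag n) = card {xs \<in> partitions n. distinct xs}
       \<and> card {xs \<in> partitions n. distinct xs} = card {xs \<in> partitions n. \<forall>x\<in>set xs. odd x}"
proof -
  have "card {xs \<in> partitions n. distinct xs} = card {A. finite A \<and> 0 \<notin> A \<and> \<Sum>A = n}"
    by (rule bij_betw_same_card[OF bij_betw_distinct_partitions])
  also have "\<dots> = card {M. (\<forall>p\<in>#M. odd p) \<and> sum_mset M = n}"
    by (rule bij_betw_same_card[OF bij_betw_glaisher, symmetric])
  also have "\<dots> = card {xs \<in> partitions n. \<forall>x\<in>set xs. odd x}"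
    by (rule bij_betw_same_card[OF bij_betw_odd_partitions, symmetric])
  finally show ?thesis using card_Diag by simp
qed

end
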